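(* Let $D \subset \mathbb{Z}^m \setminus \{\mathbf{0}\}$ be finite with $D = -D$, and let $f(z) = \sum_{d \in D} c_d z_1^{d_1}\cdots z_m^{d_m}$ be a non-zero Laurent polynomial with $c_{-d} = \overline{c_d}$ for all $d\in D$. Let $F_+ = \{z \in \mathbb{T}^m : f(z) > 0\}$, $F_- = \{z \in \mathbb{T}^m : f(z) < 0\}$, $F_0 = \{z \in \mathbb{T}^m : f(z) = 0\}$, and for $n \geq 1$ let \[ B_n = \left\{ \left(e^{2\pi i a_1/2^n}, \ldots, e^{2\pi i a_m/2^n}\right) : (a_1,\ldots,a_m) \in \mathbb{Z}^m \right\} \subset \mathbb{T}^m. \] Then \[ \lim_{n\to\infty} \frac{|F_+ \cap B_n|}{2^{nm}} = \lambda_m(F_+), \quad \lim_{n\to\infty} \frac{|F_- \cap B_n|}{2^{nm}} = \lambda_m(F_-), \quad \lim_{n\to\infty} \frac{|F_0 \cap B_n|}{2^{nm}} = 0. \]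
   Context: $\mathbb{T}$ is the unit circle; $\lambda_m$ is the normalized Lebesgue measure on $\mathbb{T}^m$ with $\lambda_m(\mathbb{T}^m)=1$. Such $f$ is real-valued on $\mathbb{T}^m$. *)

theory Defs
  imports "HOL-Analysis.Analysis"
begin

definition torus :: "(complex ^ 'm::finite) set" where
  "torus = {z. \<forall>j. cmod (z $ j) = 1}"

definition torus_param :: "real ^ 'm::finite \<Rightarrow> complex ^ 'm" where
  "torus_param t = (\<chi> j. exp (2 * of_real pi * \<i> * of_real (t $ j)))"

text \<open>Normalised Lebesgue (Haar) measure on T^m: push-forward of Lebesgue
  measure on the unit cube [0,1]^m (which has volume 1) under the angle map.\<close>
definition torus_measure :: "(complex ^ 'm::finite) measure" where
  "torus_measure = distr (density lborel (indicator (cbox (0::real^'m) One))) borel torus_param"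

definition laurent :: "(int ^ 'm::finite) set \<Rightarrow> (int ^ 'm \<Rightarrow> complex) \<Rightarrow> complex ^ 'm \<Rightarrow> complex" where
  "laurent D c z = (\<Sum>d\<in>D. c d * (\<Prod>j\<in>UNIV. (z $ j) powi (d $ j)))"

definition grid :: "nat \<Rightarrow> (complex ^ 'm::finite) set" where
  "grid n = {(\<chi> j. exp (2 * of_real pi * \<i> * of_int (a $ j) / 2 ^ n)) | a :: int ^ 'm. True}"

end

theory Submission
  imports Defs "HOL-Computational_Algebra.Polynomial"
begin

text \<open>Pulled back along the angle map t \<mapsto> (e^{2 pi i t_j})_j, f becomes the trigonometric
  polynomial g(t) = sum_d c_d e^{2 pi i d.t} on the unit cube, real-valued because c_{-d} = conj c_d,
  and B_n becomes the dyadic lattice 2^{-n} Z^m in [0,1)^m. Dyadic Riemann sums of the indicator of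
  a set S converge to the measure of S as soon as the frontier of S is null: off the frontier the
  indicator is locally constant, and dominated convergence applies. As g is real and continuous,
  the frontiers of {g > 0}, {g < 0} and {g = 0} lie in {g = 0}, and this zero set is null: in one
  variable it lies in the preimage under e^{2 pi i y} of the finitely many roots of a polynomial,
  hence is countable, and Fubini's theorem reduces several variables to one-variable slices.\<close>

section \<open>Zero sets of trigonometric polynomials\<close>

definition exp2pi :: "real \<Rightarrow> complex" where
  "exp2pi x = exp (2 * of_real pi * \<i> * of_real x)"

lemma exp2pi_add: "exp2pi (x + y) = exp2pi x * exp2pi y"
  by (simp add: exp2pi_def distrib_left exp_add)

lemma exp2pi_nonzero [simp]: "exp2pi x \<noteq> 0"
  by (simp add: exp2pi_def)

lemma norm_exp2pi [simp]: "norm (exp2pi x) = 1"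
proof -
  have "exp2pi x = exp (\<i> * of_real (2 * pi * x))"
    by (simp add: exp2pi_def mult_ac)
  then show ?thesis
    by (simp only: norm_exp_i_times)
qed

lemma exp2pi_power: "exp2pi x ^ n = exp2pi (real n * x)"
  by (simp add: exp2pi_def exp_of_nat_mult[symmetric] mult_ac)

lemma exp2pi_power_int: "exp2pi x powi k = exp2pi (of_int k * x)"
  by (simp add: exp2pi_def exp_power_int mult_ac)

lemma exp2pi_sum: "finite A \<Longrightarrow> exp2pi (\<Sum>j\<in>A. y j) = (\<Prod>j\<in>A. exp2pi (y j))"
  by (simp add: exp2pi_def sum_distrib_left exp_sum)

lemma cnj_exp2pi: "cnj (exp2pi x) = exp2pi (- x)"
  by (simp add: exp2pi_def exp_cnj)

lemma exp2pi_eq_1_iff: "exp2pi x = 1 \<longleftrightarrow> x \<in> \<int>"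
proof -
  have "exp2pi x = 1 \<longleftrightarrow> (\<exists>n::int. x = of_int n)"
    by (simp add: exp2pi_def exp_eq_1)
  then show ?thesis
    by (auto simp: Ints_def)
qed

lemma exp2pi_eq_iff: "exp2pi x = exp2pi y \<longleftrightarrow> x - y \<in> \<int>"
  using exp2pi_add[of "x - y" y] by (auto simp flip: exp2pi_eq_1_iff)

lemma continuous_on_exp2pi [continuous_intros]:
  "continuous_on A f \<Longrightarrow> continuous_on A (\<lambda>x. exp2pi (f x))"
  unfolding exp2pi_def by (intro continuous_intros)

lemma borel_measurable_exp2pi [measurable]: "exp2pi \<in> borel_measurable borel"
  by (intro borel_measurable_continuous_onI continuous_on_exp2pi continuous_on_id)

lemma countable_exp2pi_vimage:
  assumes "finite R"
  shows "countable (exp2pi -` R)"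
proof -
  have "exp2pi -` {exp2pi y} \<subseteq> range (\<lambda>n::int. y + of_int n)" for y
  proof
    fix x assume "x \<in> exp2pi -` {exp2pi y}"
    then obtain n where "x - y = of_int n"
      by (auto simp: exp2pi_eq_iff elim: Ints_cases)
    then show "x \<in> range (\<lambda>n::int. y + of_int n)"
      by (intro image_eqI[of _ _ n]) auto
  qed
  then have "countable (exp2pi -` {r})" for r
  proof (cases "r \<in> range exp2pi")
    case True
    then obtain y where "r = exp2pi y" by blast
    then show ?thesis
      using countable_subset[OF \<open>exp2pi -` {exp2pi y} \<subseteq> _\<close>] by simp
  next
    case False
    then have "exp2pi -` {r} = {}" by auto
    then show ?thesis by simp
  qed
  moreover have "exp2pi -` R = (\<Union>r\<in>R. exp2pi -` {r})"
    by blast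
  ultimately show ?thesis
    using assms by (auto intro: countable_UN countable_finite)
qed

lemma countable_trig_poly_zeros_1d:
  fixes K :: "int set" and a :: "int \<Rightarrow> complex"
  assumes "finite K" "k0 \<in> K" "a k0 \<noteq> 0"
  shows "countable {y. (\<Sum>k\<in>K. a k * exp2pi (of_int k * y)) = 0}"
proof -
  define m where "m = Min K"
  have m_le: "m \<le> k" if "k \<in> K" for k
    using assms(1) that by (simp add: m_def)
  define p where "p = (\<Sum>k\<in>K. monom (a k) (nat (k - m)))"
  have "nat (k - m) = nat (k0 - m) \<longleftrightarrow> k = k0" if "k \<in> K" for k
    using m_le[OF that] m_le[OF assms(2)] by auto
  then have "coeff p (nat (k0 - m)) = (\<Sum>k\<in>K. if k = k0 then a k else 0)"
    unfolding p_def coeff_sum coeff_monom by (intro sum.cong) auto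
  then have "p \<noteq> 0"
    using assms by auto
  have "{y. (\<Sum>k\<in>K. a k * exp2pi (of_int k * y)) = 0} \<subseteq> exp2pi -` {z. poly p z = 0}"
  proof
    fix y :: real
    assume "y \<in> {y. (\<Sum>k\<in>K. a k * exp2pi (of_int k * y)) = 0}"
    then have zero: "(\<Sum>k\<in>K. a k * exp2pi (of_int k * y)) = 0" by simp
    have "poly p (exp2pi y) = (\<Sum>k\<in>K. a k * exp2pi (of_int k * y) * exp2pi (- of_int m * y))"
      unfolding p_def poly_sum poly_monom exp2pi_power
      by (intro sum.cong refl) (simp add: m_le exp2pi_add[symmetric] algebra_simps)
    also have "\<dots> = 0"
      using zero by (simp flip: sum_distrib_right)
    finally show "y \<in> exp2pi -` {z. poly p z = 0}" by simp
  qed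
  moreover have "countable (exp2pi -` {z. poly p z = 0})"
    using \<open>p \<noteq> 0\<close> by (intro countable_exp2pi_vimage poly_roots_finite)
  ultimately show ?thesis
    by (rule countable_subset)
qed

lemma (in product_sigma_finite) null_sets_PiM_insert:
  assumes "finite I" "i \<notin> I" "Z \<in> sets (PiM (insert i I) M)"
    and "AE x in PiM I M. {y \<in> space (M i). x(i := y) \<in> Z} \<in> null_sets (M i)"
  shows "Z \<in> null_sets (PiM (insert i I) M)"
proof -
  have "emeasure (PiM (insert i I) M) Z = (\<integral>\<^sup>+ x. indicator Z x \<partial>PiM (insert i I) M)"
    using assms(3) by simp
  also have "\<dots> = (\<integral>\<^sup>+ x. (\<integral>\<^sup>+ y. indicator Z (x(i := y)) \<partial>M i) \<partial>PiM I M)"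
    using assms(1-3) by (intro product_nn_integral_insert) auto
  also have "\<dots> = (\<integral>\<^sup>+ x. 0 \<partial>PiM I M)"
    using assms(4)
  proof (intro nn_integral_cong_AE, eventually_elim)
    case (elim x)
    have "(\<integral>\<^sup>+ y. indicator Z (x(i := y)) \<partial>M i)
        = (\<integral>\<^sup>+ y. indicator {y \<in> space (M i). x(i := y) \<in> Z} y \<partial>M i)"
      by (intro nn_integral_cong) (simp add: indicator_def)
    also have "\<dots> = 0"
      using elim by (simp add: null_setsD1 null_setsD2)
    finally show ?case .
  qed
  finally show ?thesis
    using assms(3) by (simp add: null_sets_def)
qed

definition trig_poly :: "'i set \<Rightarrow> 's set \<Rightarrow> ('s \<Rightarrow> 'i \<Rightarrow> int) \<Rightarrow> ('s \<Rightarrow> complex) \<Rightarrow> ('i \<Rightarrow> real) \<Rightarrow> complex"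
  where "trig_poly I S freq c x = (\<Sum>s\<in>S. c s * exp2pi (\<Sum>j\<in>I. of_int (freq s j) * x j))"

lemma borel_measurable_trig_poly [measurable]:
  "trig_poly I S freq c \<in> borel_measurable (PiM I (\<lambda>_. lborel))"
  unfolding trig_poly_def by measurable

lemma trig_poly_insert:
  assumes "finite I" "finite S" "i \<notin> I"
  shows "trig_poly (insert i I) S freq c (x(i := y)) =
    (\<Sum>k\<in>(\<lambda>s. freq s i) ` S. trig_poly I {s \<in> S. freq s i = k} freq c x * exp2pi (of_int k * y))"
proof -
  have "trig_poly (insert i I) S freq c (x(i := y)) =
      (\<Sum>s\<in>S. c s * exp2pi (\<Sum>j\<in>I. of_int (freq s j) * x j) * exp2pi (of_int (freq s i) * y))"
    unfolding trig_poly_def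
  proof (intro sum.cong refl)
    fix s
    have "(\<Sum>j\<in>insert i I. of_int (freq s j) * (x(i := y)) j)
        = of_int (freq s i) * y + (\<Sum>j\<in>I. of_int (freq s j) * x j)"
      using assms(1,3) by (auto intro!: sum.cong)
    then show "c s * exp2pi (\<Sum>j\<in>insert i I. of_int (freq s j) * (x(i := y)) j)
        = c s * exp2pi (\<Sum>j\<in>I. of_int (freq s j) * x j) * exp2pi (of_int (freq s i) * y)"
      by (simp add: exp2pi_add mult_ac)
  qed
  also have "\<dots> = (\<Sum>k\<in>(\<lambda>s. freq s i) ` S. \<Sum>s\<in>{s \<in> S. freq s i = k}.
      c s * exp2pi (\<Sum>j\<in>I. of_int (freq s j) * x j) * exp2pi (of_int (freq s i) * y))"
    using assms(2) by (rule sum.image_gen)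
  also have "\<dots> = (\<Sum>k\<in>(\<lambda>s. freq s i) ` S. trig_poly I {s \<in> S. freq s i = k} freq c x * exp2pi (of_int k * y))"
    unfolding trig_poly_def sum_distrib_right by (intro sum.cong refl) auto
  finally show ?thesis .
qed

text \<open>Frequencies outside I are ignored, so distinct terms need only differ in their restrictions to I.\<close>
lemma null_sets_trig_poly_zeros_PiM:
  assumes "finite I" "finite S" "inj_on (\<lambda>s. restrict (freq s) I) S" "s0 \<in> S" "c s0 \<noteq> 0"
  shows "{x \<in> space (PiM I (\<lambda>_. lborel)). trig_poly I S freq c x = 0} \<in> null_sets (PiM I (\<lambda>_. lborel))"
  using assms
proof (induction I arbitrary: S s0 rule: finite_induct)
  case empty
  then have "S = {s0}"
    by (auto dest: inj_onD)
  then show ?case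
    using empty by (simp add: trig_poly_def)
next
  case (insert i I)
  interpret product_sigma_finite "\<lambda>_. lborel :: real measure"
    by standard
  define k0 where "k0 = freq s0 i"
  define S0 where "S0 = {s \<in> S. freq s i = k0}"
  have inj_S0: "inj_on (\<lambda>s. restrict (freq s) I) S0"
  proof (rule inj_onI)
    fix s t assume "s \<in> S0" "t \<in> S0" "restrict (freq s) I = restrict (freq t) I"
    then have "restrict (freq s) (insert i I) = restrict (freq t) (insert i I)"
      by (auto simp: S0_def fun_eq_iff restrict_def split: if_splits)
    moreover have "s \<in> S" "t \<in> S"
      using \<open>s \<in> S0\<close> \<open>t \<in> S0\<close> by (auto simp: S0_def)
    ultimately show "s = t"
      by (rule inj_onD[OF insert.prems(2)])
  qed
  have null_S0: "{x \<in> space (PiM I (\<lambda>_. lborel)). trig_poly I S0 freq c x = 0} \<in> null_sets (PiM I (\<lambda>_. lborel))"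
    by (rule insert.IH[OF _ inj_S0]) (use insert.prems in \<open>auto simp: S0_def k0_def\<close>)
  have "AE x in PiM I (\<lambda>_. lborel). trig_poly I S0 freq c x \<noteq> 0"
    using AE_not_in[OF null_S0] AE_space by eventually_elim auto
  let ?Z = "{x \<in> space (PiM (insert i I) (\<lambda>_. lborel)). trig_poly (insert i I) S freq c x = 0}"
  show ?case
  proof (rule null_sets_PiM_insert[OF insert.hyps])
    show "?Z \<in> sets (PiM (insert i I) (\<lambda>_. lborel))"
      by measurable
    show "AE x in PiM I (\<lambda>_. lborel). {y \<in> space lborel. x(i := y) \<in> ?Z} \<in> null_sets lborel"
      using \<open>AE x in _. trig_poly I S0 freq c x \<noteq> 0\<close>
    proof eventually_elim
      case (elim x)
      let ?a = "\<lambda>k. trig_poly I {s \<in> S. freq s i = k} freq c x"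
      have "{y \<in> space lborel. x(i := y) \<in> ?Z} \<subseteq> {y. (\<Sum>k\<in>(\<lambda>s. freq s i) ` S. ?a k * exp2pi (of_int k * y)) = 0}"
        using insert by (auto simp: trig_poly_insert)
      moreover have "countable {y. (\<Sum>k\<in>(\<lambda>s. freq s i) ` S. ?a k * exp2pi (of_int k * y)) = 0}"
        using insert.prems elim by (intro countable_trig_poly_zeros_1d[of _ k0]) (auto simp: S0_def k0_def)
      ultimately show ?case
        by (auto intro: countable_imp_null_set_lborel countable_subset)
    qed
  qed
qed

definition of_int_vec :: "int ^ 'm::finite \<Rightarrow> real ^ 'm" where
  "of_int_vec d = (\<chi> j. of_int (d $ j))"

lemma of_int_vec_uminus: "of_int_vec (- d) = - of_int_vec d"
  by (simp add: of_int_vec_def vec_eq_iff)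

definition trig_poly_vec :: "(int ^ 'm::finite) set \<Rightarrow> (int ^ 'm \<Rightarrow> complex) \<Rightarrow> real ^ 'm \<Rightarrow> complex"
  where "trig_poly_vec D c t = (\<Sum>d\<in>D. c d * exp2pi (of_int_vec d \<bullet> t))"

lemma continuous_on_trig_poly_vec [continuous_intros]: "continuous_on A (trig_poly_vec D c)"
  unfolding trig_poly_vec_def by (intro continuous_intros)

lemma borel_measurable_trig_poly_vec [measurable]: "trig_poly_vec D c \<in> borel_measurable borel"
  by (intro borel_measurable_continuous_onI continuous_on_trig_poly_vec)

lemma cnj_trig_poly_vec:
  assumes "uminus ` D = D" "\<And>d. d \<in> D \<Longrightarrow> c (- d) = cnj (c d)"
  shows "cnj (trig_poly_vec D c t) = trig_poly_vec D c t"
proof -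
  have "cnj (trig_poly_vec D c t) = (\<Sum>d\<in>D. c (- d) * exp2pi (of_int_vec (- d) \<bullet> t))"
    unfolding trig_poly_vec_def by (simp add: cnj_exp2pi assms(2) of_int_vec_uminus)
  also have "\<dots> = (\<Sum>d\<in>uminus ` D. c d * exp2pi (of_int_vec d \<bullet> t))"
    by (subst sum.reindex) (auto simp: inj_on_def)
  finally show ?thesis
    by (simp add: assms(1) trig_poly_vec_def)
qed

lemma null_sets_trig_poly_vec_zeros:
  fixes D :: "(int ^ 'm::finite) set"
  assumes "finite D" "d0 \<in> D" "c d0 \<noteq> 0"
  shows "{t. trig_poly_vec D c t = 0} \<in> null_sets lborel"
proof -
  let ?P = "PiM (Basis :: (real ^ 'm) set) (\<lambda>_. lborel :: real measure)"
  define \<phi> where "\<phi> x = (\<Sum>b\<in>Basis. x b *\<^sub>R b)" for x :: "real ^ 'm \<Rightarrow> real"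
  define freq where "freq d b = \<lfloor>of_int_vec d \<bullet> b\<rfloor>" for d :: "int ^ 'm" and b :: "real ^ 'm"
  have freq_axis: "freq d (axis j 1) = d $ j" for d j
    by (simp add: freq_def of_int_vec_def inner_axis)
  have "of_int_vec d \<bullet> \<phi> x = (\<Sum>b\<in>Basis. of_int (freq d b) * x b)" for d x
    unfolding \<phi>_def inner_sum_right
    by (intro sum.cong refl) (auto simp: Basis_vec_def freq_axis inner_axis of_int_vec_def)
  then have vimage_eq: "\<phi> -` {t. trig_poly_vec D c t = 0} \<inter> space ?P = {x \<in> space ?P. trig_poly Basis D freq c x = 0}"
    by (auto simp: trig_poly_vec_def trig_poly_def)
  have "inj_on (\<lambda>d. restrict (freq d) Basis) D"
  proof (rule inj_onI)
    fix d d' assume eq: "restrict (freq d) Basis = restrict (freq d') Basis"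
    have "freq d (axis j 1) = freq d' (axis j 1)" for j
    proof -
      have "axis j (1::real) \<in> Basis"
        by (auto simp: Basis_vec_def)
      then show ?thesis
        using fun_cong[OF eq, of "axis j 1"] by simp
    qed
    then show "d = d'"
      by (simp add: freq_axis vec_eq_iff)
  qed
  then have "\<phi> -` {t. trig_poly_vec D c t = 0} \<inter> space ?P \<in> null_sets ?P"
    unfolding vimage_eq using assms by (intro null_sets_trig_poly_zeros_PiM finite_Basis)
  moreover have "\<phi> \<in> measurable ?P borel"
    unfolding \<phi>_def by measurable
  moreover have "{t. trig_poly_vec D c t = 0} \<in> sets borel"
    by measurable
  ultimately have "{t. trig_poly_vec D c t = 0} \<in> null_sets (distr ?P borel \<phi>)"
    by (simp add: null_sets_distr_iff)
  moreover have "distr ?P borel \<phi> = lborel"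
    unfolding \<phi>_def by (rule lborel_eq[symmetric])
  ultimately show ?thesis
    by simp
qed

section \<open>Dyadic Riemann sums\<close>

definition dyadic_indices :: "nat \<Rightarrow> (int ^ 'm::finite) set" where
  "dyadic_indices n = {a. \<forall>j. 0 \<le> a $ j \<and> a $ j < 2 ^ n}"

definition dyadic_point :: "nat \<Rightarrow> int ^ 'm::finite \<Rightarrow> real ^ 'm" where
  "dyadic_point n a = (\<chi> j. of_int (a $ j) / 2 ^ n)"

definition dyadic_floor :: "nat \<Rightarrow> real ^ 'm::finite \<Rightarrow> int ^ 'm" where
  "dyadic_floor n t = (\<chi> j. \<lfloor>2 ^ n * t $ j\<rfloor>)"

lemma finite_dyadic_indices: "finite (dyadic_indices n)"
proof -
  have "dyadic_indices n \<subseteq> vec_lambda ` (PiE UNIV (\<lambda>_. {0..<2 ^ n}))"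
  proof
    fix a :: "int ^ 'm" assume "a \<in> dyadic_indices n"
    then have "(\<lambda>j. a $ j) \<in> PiE UNIV (\<lambda>_. {0..<2 ^ n})"
      by (auto simp: dyadic_indices_def)
    then show "a \<in> vec_lambda ` (PiE UNIV (\<lambda>_. {0..<2 ^ n}))"
      by (intro image_eqI[of _ _ "\<lambda>j. a $ j"]) auto
  qed
  then show ?thesis
    by (rule finite_subset) (auto intro!: finite_imageI finite_PiE)
qed

lemma dyadic_cell_eq:
  "dyadic_floor n -` {a} = {t. \<forall>j. of_int (a $ j) / 2 ^ n \<le> t $ j \<and> t $ j < (of_int (a $ j) + 1) / 2 ^ n}"
proof -
  have floor_iff: "of_int k / 2 ^ n \<le> x \<and> x < (of_int k + 1) / 2 ^ n \<longleftrightarrow> \<lfloor>2 ^ n * x\<rfloor> = k"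
    for k and x :: real
    by (simp add: floor_eq_iff pos_divide_le_eq pos_less_divide_eq mult.commute)
  show ?thesis
    unfolding floor_iff by (auto simp: dyadic_floor_def vec_eq_iff)
qed

lemma sets_dyadic_cell [measurable]: "dyadic_floor n -` {a} \<in> sets borel"
  unfolding dyadic_cell_eq by measurable

lemma emeasure_dyadic_cell:
  "emeasure lborel (dyadic_floor n -` {a :: int ^ 'm::finite}) = ennreal ((1 / 2 ^ n) ^ CARD('m))"
proof -
  define l :: "real ^ 'm" where "l = dyadic_point n a"
  define u :: "real ^ 'm" where "u = (\<chi> j. (of_int (a $ j) + 1) / 2 ^ n)"
  have "\<forall>b\<in>Basis. l \<bullet> b \<le> u \<bullet> b"
    by (auto simp: Basis_vec_def inner_axis l_def u_def dyadic_point_def divide_right_mono)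
  moreover have "(\<Prod>b\<in>Basis. (u - l) \<bullet> b) = (1 / 2 ^ n) ^ CARD('m)"
  proof -
    have "(\<Prod>b\<in>Basis. (u - l) \<bullet> b) = (\<Prod>b\<in>(Basis :: (real ^ 'm) set). 1 / 2 ^ n)"
      by (intro prod.cong refl)
        (auto simp: Basis_vec_def inner_axis l_def u_def dyadic_point_def diff_divide_distrib[symmetric])
    then show ?thesis
      by (simp add: DIM_cart)
  qed
  moreover have "box l u \<subseteq> dyadic_floor n -` {a}" "dyadic_floor n -` {a} \<subseteq> cbox l u"
    unfolding dyadic_cell_eq by (auto simp: mem_box_cart l_def u_def dyadic_point_def less_imp_le)
  then have "emeasure lborel (box l u) \<le> emeasure lborel (dyadic_floor n -` {a})"
    "emeasure lborel (dyadic_floor n -` {a}) \<le> emeasure lborel (cbox l u)"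
    by (auto intro!: emeasure_mono)
  ultimately show ?thesis
    by (simp add: emeasure_lborel_box_eq emeasure_lborel_cbox_eq)
qed

lemma dyadic_floor_vimage_eq_UN: "dyadic_floor n -` A = (\<Union>a\<in>A. dyadic_floor n -` {a})"
  by blast

lemma measure_dyadic_floor_vimage:
  fixes A :: "(int ^ 'm::finite) set"
  assumes "finite A"
  shows "measure lborel (dyadic_floor n -` A) = real (card A) / 2 ^ (n * CARD('m))"
proof -
  have "measure lborel (dyadic_floor n -` A) = (\<Sum>a\<in>A. measure lborel (dyadic_floor n -` {a :: int ^ 'm}))"
    unfolding dyadic_floor_vimage_eq_UN[of n A] using assms
    by (intro measure_finite_Union) (auto simp: disjoint_family_on_def emeasure_dyadic_cell)
  also have "\<dots> = real (card A) / 2 ^ (n * CARD('m))"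
    by (simp add: measure_def emeasure_dyadic_cell power_mult power_one_over)
  finally show ?thesis .
qed

lemma sets_dyadic_floor_vimage [measurable]: "finite A \<Longrightarrow> dyadic_floor n -` A \<in> sets borel"
  unfolding dyadic_floor_vimage_eq_UN[of n A] by (intro sets.finite_UN) auto

lemma dyadic_floor_vimage_subset_cbox:
  assumes "A \<subseteq> dyadic_indices n"
  shows "dyadic_floor n -` A \<subseteq> cbox 0 (One :: real ^ 'm::finite)"
proof
  fix t :: "real ^ 'm"
  assume "t \<in> dyadic_floor n -` A"
  then have a: "dyadic_floor n t \<in> dyadic_indices n"
    using assms by auto
  have "0 \<le> t $ j \<and> t $ j \<le> 1" for j
  proof -
    have "0 \<le> \<lfloor>2 ^ n * t $ j\<rfloor> \<and> \<lfloor>2 ^ n * t $ j\<rfloor> < 2 ^ n"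
      using a by (simp add: dyadic_indices_def dyadic_floor_def)
    then have "0 \<le> 2 ^ n * t $ j" "2 ^ n * t $ j \<le> 2 ^ n * 1"
      by (simp_all add: floor_less_iff less_imp_le)
    moreover have "(0::real) < 2 ^ n"
      by simp
    ultimately show ?thesis
      by (auto simp: zero_le_mult_iff mult_le_cancel_left_pos)
  qed
  then show "t \<in> cbox 0 One"
    by (simp add: mem_box_cart cart_eq_inner_axis)
qed

lemma dyadic_floor_in_dyadic_indices:
  assumes "t \<in> box 0 (One :: real ^ 'm::finite)"
  shows "dyadic_floor n t \<in> dyadic_indices n"
proof -
  have "0 \<le> \<lfloor>2 ^ n * t $ j\<rfloor> \<and> \<lfloor>2 ^ n * t $ j\<rfloor> < 2 ^ n" for j
  proof -
    have "0 < t $ j" "t $ j < 1"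
      using assms by (simp_all add: mem_box_cart cart_eq_inner_axis)
    then have "0 \<le> 2 ^ n * t $ j" "2 ^ n * t $ j < 2 ^ n"
      by simp_all
    then show ?thesis
      by (simp add: floor_less_iff)
  qed
  then show ?thesis
    by (simp add: dyadic_indices_def dyadic_floor_def)
qed

lemma floor_power2_tendsto: "(\<lambda>n. of_int \<lfloor>2 ^ n * x\<rfloor> / 2 ^ n) \<longlonglongrightarrow> (x :: real)"
proof (rule tendsto_sandwich)
  have "x - 1 / 2 ^ n \<le> of_int \<lfloor>2 ^ n * x\<rfloor> / 2 ^ n" for n :: nat
  proof -
    have "(2 ^ n * x - 1) / 2 ^ n \<le> of_int \<lfloor>2 ^ n * x\<rfloor> / 2 ^ n"
      by (intro divide_right_mono) (linarith, simp)
    then show ?thesis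
      by (simp add: diff_divide_distrib)
  qed
  then show "\<forall>\<^sub>F n in sequentially. x - 1 / 2 ^ n \<le> of_int \<lfloor>2 ^ n * x\<rfloor> / 2 ^ n"
    by simp
  show "\<forall>\<^sub>F n in sequentially. of_int \<lfloor>2 ^ n * x\<rfloor> / 2 ^ n \<le> x"
    by (intro always_eventually allI) (simp add: field_simps)
  show "(\<lambda>n. x - 1 / 2 ^ n) \<longlonglongrightarrow> x"
    using tendsto_diff[OF tendsto_const LIMSEQ_divide_realpow_zero[of 2 1]] by simp
qed simp

lemma dyadic_point_floor_tendsto: "(\<lambda>n. dyadic_point n (dyadic_floor n t)) \<longlonglongrightarrow> t"
proof -
  have "(\<lambda>n. \<chi> j. of_int \<lfloor>2 ^ n * t $ j\<rfloor> / 2 ^ n) \<longlonglongrightarrow> (\<chi> j. t $ j)"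
    by (intro tendsto_vec_lambda floor_power2_tendsto)
  then show ?thesis
    by (simp add: dyadic_point_def dyadic_floor_def)
qed

definition dyadic_approx :: "nat \<Rightarrow> (real ^ 'm::finite) set \<Rightarrow> (real ^ 'm) set" where
  "dyadic_approx n S = dyadic_floor n -` {a \<in> dyadic_indices n. dyadic_point n a \<in> S}"

lemma finite_Collect_dyadic_indices: "finite {a \<in> dyadic_indices n. P a}"
  by (auto intro: finite_subset[OF _ finite_dyadic_indices])

lemma sets_dyadic_approx [measurable]: "dyadic_approx n S \<in> sets borel"
  unfolding dyadic_approx_def by (intro sets_dyadic_floor_vimage finite_Collect_dyadic_indices)

lemma measure_dyadic_approx:
  fixes S :: "(real ^ 'm::finite) set"
  shows "measure lborel (dyadic_approx n S) =
    real (card {a \<in> dyadic_indices n. dyadic_point n a \<in> S}) / 2 ^ (n * CARD('m))"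
  unfolding dyadic_approx_def by (intro measure_dyadic_floor_vimage finite_Collect_dyadic_indices)

lemma dyadic_approx_subset_cbox: "dyadic_approx n S \<subseteq> cbox 0 One"
  unfolding dyadic_approx_def by (rule dyadic_floor_vimage_subset_cbox) auto

lemma indicator_dyadic_approx_tendsto:
  fixes S :: "(real ^ 'm::finite) set"
  assumes "t \<notin> frontier S" "t \<notin> cbox 0 One - box 0 One"
  shows "(\<lambda>n. indicator (dyadic_approx n S) t :: real) \<longlonglongrightarrow> indicator (S \<inter> cbox 0 One) t"
proof (cases "t \<in> box 0 One")
  case False
  with assms(2) have "t \<notin> cbox 0 One"
    by blast
  then have "t \<notin> dyadic_approx n S" for n
    using dyadic_approx_subset_cbox by blast
  with \<open>t \<notin> cbox 0 One\<close> show ?thesis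
    by simp
next
  case True
  have "t \<in> interior S \<or> t \<in> interior (- S)"
    using assms(1) by (auto simp: frontier_def interior_complement)
  then obtain U where "U = interior S \<or> U = interior (- S)" "t \<in> U"
    by blast
  then have "eventually (\<lambda>s. s \<in> U) (nhds t)" "\<forall>s\<in>U. s \<in> S \<longleftrightarrow> t \<in> S"
    using interior_subset by (auto intro: eventually_nhds_in_open)
  then have "eventually (\<lambda>s. s \<in> S \<longleftrightarrow> t \<in> S) (nhds t)"
    by (auto elim: eventually_mono)
  then have "eventually (\<lambda>n. dyadic_point n (dyadic_floor n t) \<in> S \<longleftrightarrow> t \<in> S) sequentially"
    using dyadic_point_floor_tendsto by (rule eventually_compose_filterlim)
  then have "eventually (\<lambda>n. indicator (dyadic_approx n S) t = (indicator (S \<inter> cbox 0 One) t :: real))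
      sequentially"
    by eventually_elim (use True box_subset_cbox[of 0 One] dyadic_floor_in_dyadic_indices[OF True]
      in \<open>auto simp: indicator_def dyadic_approx_def\<close>)
  then show ?thesis
    by (rule tendsto_eventually)
qed

lemma dyadic_count_tendsto_measure:
  fixes S :: "(real ^ 'm::finite) set"
  assumes "S \<in> sets borel" "frontier S \<in> null_sets lborel"
  shows "(\<lambda>n. real (card {a \<in> dyadic_indices n. dyadic_point n a \<in> S}) / 2 ^ (n * CARD('m)))
    \<longlonglongrightarrow> measure lborel (S \<inter> cbox 0 One)"
proof -
  have "(\<lambda>n. integral\<^sup>L lborel (indicator (dyadic_approx n S) :: _ \<Rightarrow> real))
      \<longlonglongrightarrow> integral\<^sup>L lborel (indicator (S \<inter> cbox 0 One))"
  proof (rule integral_dominated_convergence[where w = "indicator (cbox 0 One)"])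
    show "indicator (S \<inter> cbox 0 One) \<in> borel_measurable lborel"
      using assms(1) by measurable
    show "integrable lborel (indicator (cbox 0 (One :: real ^ 'm)) :: _ \<Rightarrow> real)"
      by (simp add: emeasure_lborel_cbox_eq)
    show "AE t in lborel. norm (indicator (dyadic_approx n S) t :: real) \<le> indicator (cbox 0 One) t" for n
      using dyadic_approx_subset_cbox[of n S] by (auto simp: indicator_def)
    show "AE t in lborel. (\<lambda>n. indicator (dyadic_approx n S) t :: real) \<longlonglongrightarrow> indicator (S \<inter> cbox 0 One) t"
      using AE_not_in[OF assms(2)] AE_not_in[OF null_sets_cbox_Diff_box[of 0 One]]
      by eventually_elim (rule indicator_dyadic_approx_tendsto)
  qed measurable
  then show ?thesis
    by (simp add: measure_dyadic_approx)
qed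

lemma frontier_sign_sets_subset:
  fixes \<phi> :: "'a::topological_space \<Rightarrow> real"
  assumes "continuous_on UNIV \<phi>"
  shows "frontier {t. 0 < \<phi> t} \<subseteq> {t. \<phi> t = 0}"
    and "frontier {t. \<phi> t < 0} \<subseteq> {t. \<phi> t = 0}"
    and "frontier {t. \<phi> t = 0} \<subseteq> {t. \<phi> t = 0}"
proof -
  have pos: "frontier {t. 0 < \<psi> t} \<subseteq> {t. \<psi> t = 0}" if "continuous_on UNIV \<psi>" for \<psi> :: "'a \<Rightarrow> real"
  proof -
    have "interior {t. 0 < \<psi> t} = {t. 0 < \<psi> t}"
      using that by (intro interior_open open_Collect_less continuous_on_const)
    moreover have "closure {t. 0 < \<psi> t} \<subseteq> {t. 0 \<le> \<psi> t}"
      using that by (intro closure_minimal closed_Collect_le continuous_on_const) auto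
    ultimately show ?thesis
      by (auto simp: frontier_def)
  qed
  show "frontier {t. 0 < \<phi> t} \<subseteq> {t. \<phi> t = 0}"
    using pos[OF assms] .
  show "frontier {t. \<phi> t < 0} \<subseteq> {t. \<phi> t = 0}"
    using pos[OF continuous_on_minus[OF assms]] by simp
  show "frontier {t. \<phi> t = 0} \<subseteq> {t. \<phi> t = 0}"
    using assms by (intro frontier_subset_closed closed_Collect_eq continuous_on_const)
qed

section \<open>Transfer to the torus\<close>

lemma torus_param_exp2pi: "torus_param t = (\<chi> j. exp2pi (t $ j))"
  by (simp add: torus_param_def exp2pi_def)

lemma torus_param_in_torus: "torus_param t \<in> torus"
  by (simp add: torus_def torus_param_exp2pi)

lemma borel_measurable_torus_param [measurable]: "torus_param \<in> borel_measurable borel"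
  unfolding torus_param_def by (intro borel_measurable_continuous_onI continuous_intros)

lemma torus_param_dyadic_point_eq_iff:
  "torus_param (dyadic_point n a) = torus_param (dyadic_point n b) \<longleftrightarrow>
    (\<forall>j. a $ j mod 2 ^ n = b $ j mod 2 ^ n)"
proof -
  have "of_int k / 2 ^ n \<in> (\<int> :: real set) \<longleftrightarrow> (2 ^ n :: int) dvd k" for k :: int
  proof
    assume "of_int k / 2 ^ n \<in> (\<int> :: real set)"
    then obtain q where "of_int k / 2 ^ n = (of_int q :: real)"
      by (elim Ints_cases)
    then have "(of_int k :: real) = of_int (q * 2 ^ n)"
      by (simp add: field_simps)
    then have "k = q * 2 ^ n"
      by (simp only: of_int_eq_iff)
    then show "(2 ^ n :: int) dvd k"
      by simp
  qed (auto simp: dvd_def)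
  then show ?thesis
    by (simp add: torus_param_exp2pi dyadic_point_def vec_eq_iff exp2pi_eq_iff
        mod_eq_dvd_iff flip: diff_divide_distrib of_int_diff)
qed

lemma grid_eq_image_dyadic_point: "grid n = (\<lambda>a. torus_param (dyadic_point n a)) ` dyadic_indices n"
proof -
  have grid_point: "(\<chi> j. exp (2 * of_real pi * \<i> * of_int (a $ j) / 2 ^ n)) = torus_param (dyadic_point n a)"
    for a :: "int ^ 'm"
    by (simp add: torus_param_def dyadic_point_def vec_eq_iff)
  have "torus_param (dyadic_point n a) = torus_param (dyadic_point n (\<chi> j. a $ j mod 2 ^ n))"
    "(\<chi> j. a $ j mod 2 ^ n) \<in> dyadic_indices n" for a :: "int ^ 'm"
    by (simp_all add: torus_param_dyadic_point_eq_iff dyadic_indices_def)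
  then show ?thesis
    unfolding grid_def grid_point by blast
qed

lemma inj_on_torus_param_dyadic_point:
  "inj_on (\<lambda>a. torus_param (dyadic_point n a)) (dyadic_indices n)"
proof (rule inj_onI)
  fix a b :: "int ^ 'm"
  assume "a \<in> dyadic_indices n" "b \<in> dyadic_indices n"
    and "torus_param (dyadic_point n a) = torus_param (dyadic_point n b)"
  then show "a = b"
    unfolding torus_param_dyadic_point_eq_iff by (simp add: dyadic_indices_def vec_eq_iff)
qed

lemma card_Int_grid:
  "card (S \<inter> grid n) = card {a \<in> dyadic_indices n. dyadic_point n a \<in> torus_param -` S}"
proof -
  have "S \<inter> grid n = (\<lambda>a. torus_param (dyadic_point n a)) ` {a \<in> dyadic_indices n. dyadic_point n a \<in> torus_param -` S}"
    unfolding grid_eq_image_dyadic_point by auto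
  then show ?thesis
    by (simp add: card_image inj_on_subset[OF inj_on_torus_param_dyadic_point])
qed

lemma sets_torus_param_vimage:
  assumes "S \<in> sets borel"
  shows "torus_param -` S \<in> sets borel"
  using measurable_sets_borel[OF borel_measurable_torus_param assms] by simp

lemma measure_torus_measure:
  assumes "S \<in> sets borel"
  shows "measure torus_measure S = measure lborel (torus_param -` S \<inter> cbox 0 One)"
  using assms sets_torus_param_vimage[OF assms] unfolding torus_measure_def
  by (simp add: measure_distr measure_restricted Int_commute)

lemma grid_count_tendsto_torus_measure:
  fixes S :: "(complex ^ 'm::finite) set"
  assumes "S \<in> sets borel" "frontier (torus_param -` S) \<in> null_sets lborel"
  shows "(\<lambda>n. real (card (S \<inter> grid n)) / 2 ^ (n * CARD('m))) \<longlonglongrightarrow> measure torus_measure S"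
  unfolding card_Int_grid measure_torus_measure[OF assms(1)]
  using assms by (intro dyadic_count_tendsto_measure sets_torus_param_vimage)

lemma laurent_torus_param:
  fixes D :: "(int ^ 'm::finite) set"
  shows "laurent D c (torus_param t) = trig_poly_vec D c t"
proof -
  have "(\<Prod>j\<in>UNIV. torus_param t $ j powi d $ j) = exp2pi (of_int_vec d \<bullet> t)" for d :: "int ^ 'm"
    by (simp add: torus_param_exp2pi exp2pi_power_int exp2pi_sum inner_vec_def of_int_vec_def)
  then show ?thesis
    by (simp add: laurent_def trig_poly_vec_def)
qed

lemma borel_measurable_vec_nth [measurable]:
  "(\<lambda>x :: 'a::{real_normed_vector, second_countable_topology} ^ 'n::finite. x $ j) \<in> borel_measurable borel"
  by (intro borel_measurable_continuous_onI continuous_intros)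

lemma borel_measurable_power_int [measurable]: "(\<lambda>z :: complex. z powi k) \<in> borel_measurable borel"
  unfolding power_int_def by measurable

lemma borel_measurable_laurent [measurable]: "laurent D c \<in> borel_measurable borel"
  unfolding laurent_def by measurable

lemma sets_torus [measurable]: "torus \<in> sets borel"
  unfolding torus_def by measurable

theorem lemma3:
  fixes D :: "(int ^ 'm::finite) set" and c :: "int ^ 'm \<Rightarrow> complex"
  assumes "finite D" and "0 \<notin> D" and "uminus ` D = D"
    and "\<And>d. d \<in> D \<Longrightarrow> c (- d) = cnj (c d)"
    and "\<exists>d\<in>D. c d \<noteq> 0"
  defines "f \<equiv> laurent D c"
  defines "Fp \<equiv> {z \<in> torus. Re (f z) > 0}"
      and "Fm \<equiv> {z \<in> torus. Re (f z) < 0}"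
      and "F0 \<equiv> {z \<in> torus. f z = 0}"
  shows "((\<lambda>n. real (card (Fp \<inter> grid n)) / 2 ^ (n * CARD('m)))
             \<longlonglongrightarrow> measure torus_measure Fp) \<and>
         ((\<lambda>n. real (card (Fm \<inter> grid n)) / 2 ^ (n * CARD('m)))
             \<longlonglongrightarrow> measure torus_measure Fm) \<and>
         ((\<lambda>n. real (card (F0 \<inter> grid n)) / 2 ^ (n * CARD('m))) \<longlonglongrightarrow> 0)"
proof -
  define g where "g = trig_poly_vec D c"
  have Re_g_cont: "continuous_on UNIV (\<lambda>t. Re (g t))"
    unfolding g_def by (intro continuous_on_Re continuous_on_trig_poly_vec)
  have g_real: "Re (g t) = 0 \<longleftrightarrow> g t = 0" for t
    using cnj_trig_poly_vec[of D c t] assms(3,4) by (auto simp: g_def complex_eq_iff)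
  have "{t. g t = 0} \<in> null_sets lborel"
    using assms(1,5) null_sets_trig_poly_vec_zeros by (auto simp: g_def)
  then have null: "{t. Re (g t) = 0} \<in> null_sets lborel"
    by (simp add: g_real)
  have vimage: "torus_param -` Fp = {t. 0 < Re (g t)}" "torus_param -` Fm = {t. Re (g t) < 0}"
    "torus_param -` F0 = {t. Re (g t) = 0}"
    using laurent_torus_param[of D c]
    by (auto simp: Fp_def Fm_def F0_def f_def g_def[symmetric] g_real torus_param_in_torus)
  have sets: "Fp \<in> sets borel" "Fm \<in> sets borel" "F0 \<in> sets borel"
    unfolding Fp_def Fm_def F0_def f_def by measurable
  have frontier_null: "frontier (torus_param -` F) \<in> null_sets lborel" if "F \<in> {Fp, Fm, F0}" for F
    using that frontier_sign_sets_subset[OF Re_g_cont]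
    by (auto simp: vimage borel_closed intro!: null_sets_subset[OF null])
  have "measure torus_measure F0 = 0"
    unfolding measure_torus_measure[OF sets(3)] vimage
    using null_set_Int2[OF null, of "cbox 0 One"] by (simp add: measure_def null_setsD1)
  then show ?thesis
    using grid_count_tendsto_torus_measure[OF sets(1) frontier_null]
      grid_count_tendsto_torus_measure[OF sets(2) frontier_null]
      grid_count_tendsto_torus_measure[OF sets(3) frontier_null] by simp
qed

end
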